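(* Let $d\in\mathbb{N}$ and $\varepsilon>0$. There is $k$ such that for every sequence of vectors $v_1,\dots,v_n\in\mathbb{Q}_{\ge0}^d$ there is a sequence $w_1,\dots,w_n\in\mathbb{Q}_{\ge0}^d$ such that for each coordinate $i=1,\dots,d$, $\sum_{j=1}^n|v_j^{(i)}-w_j^{(i)}|\le\varepsilon\sum_{j=1}^n v_j^{(i)}$, and such that up to rescaling there are at most $k$ distinct vectors among $w_1,\dots,w_n$ (i.e. there are $u_1,\dots,u_k$ such that every $w_j$ equals $\lambda u_\ell$ for some $\ell$ and some $\lambda\ge0$).
   Context: $v^{(i)}$ denotes the $i$-th coordinate of a vector $v$. *)

theory Defs
  imports "HOL-Analysis.Analysis"
begin

end

theory Submission
  imports Defs
begin

text \<open>Divide coordinate \<open>i\<close> of every vector by its total \<open>S i = \<Sum>j. v j i\<close>; the rescaled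
vectors \<open>y j\<close> then have total mass \<open>\<Sum>j T j \<le> d\<close>, where \<open>T j = \<Sum>i. y j i\<close>. Write
\<open>y j = T j * x j\<close> with \<open>x j \<in> [0,1]\<^sup>d\<close> and round \<open>x j\<close> down to the grid of mesh \<open>1/B\<close>. Each
entry of \<open>y j\<close> then moves by at most \<open>T j / B\<close>, so after undoing the rescaling coordinate
\<open>i\<close> moves in total by at most \<open>d / B * S i\<close>, which is at most \<open>\<epsilon> * S i\<close> once \<open>B \<ge> d / \<epsilon>\<close>.
Every approximating vector is a nonnegative multiple of the rescaling of one of the
\<open>(B + 1)\<^sup>d\<close> grid points, a number independent of the input.\<close>

lemma floor_grid_error:
  fixes x :: "'a::floor_ceiling"
  assumes "B > 0" "0 \<le> x"
  shows "\<bar>x - of_nat (nat \<lfloor>x * of_nat B\<rfloor>) / of_nat B\<bar> \<le> 1 / of_nat B"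
proof -
  let ?f = "\<lfloor>x * of_nat B\<rfloor>"
  have B: "(0::'a) < of_nat B" using assms by simp
  have "x - of_nat (nat ?f) / of_nat B = (x * of_nat B - of_int ?f) / of_nat B"
    using assms B by (simp add: field_simps)
  moreover have "0 \<le> x * of_nat B - of_int ?f" "x * of_nat B - of_int ?f \<le> 1"
    by linarith+
  ultimately show ?thesis
    using B by (simp add: divide_right_mono)
qed

lemma nat_floor_mult_le:
  fixes x :: "'a::floor_ceiling"
  assumes "x \<le> 1"
  shows "nat \<lfloor>x * of_nat B\<rfloor> \<le> B"
proof -
  have "x * of_nat B \<le> of_nat B"
    using mult_right_mono[OF assms, of "of_nat B"] by simp
  then have "\<lfloor>x * of_nat B\<rfloor> \<le> int B"
    by (metis floor_mono floor_of_nat)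
  then show ?thesis by simp
qed

lemma round_down_to_grid:
  fixes x :: "nat \<Rightarrow> 'a::floor_ceiling"
  assumes "B > 0" and "\<forall>i<d. 0 \<le> x i \<and> x i \<le> 1"
  shows "\<exists>t \<in> PiE {..<d} (\<lambda>_. {0..B}).
           \<forall>i<d. \<bar>x i - of_nat (t i) / of_nat B\<bar> \<le> 1 / of_nat B"
proof
  let ?t = "restrict (\<lambda>i. nat \<lfloor>x i * of_nat B\<rfloor>) {..<d}"
  show "?t \<in> PiE {..<d} (\<lambda>_. {0..B})"
    using assms(2) nat_floor_mult_le by (auto simp: PiE_iff)
  show "\<forall>i<d. \<bar>x i - of_nat (?t i) / of_nat B\<bar> \<le> 1 / of_nat B"
  proof (intro allI impI)
    fix i assume "i < d"
    then show "\<bar>x i - of_nat (?t i) / of_nat B\<bar> \<le> 1 / of_nat B"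
      using assms(2) floor_grid_error[OF assms(1), of "x i"] by simp
  qed
qed

lemma mult_divide_cancel_of_le:
  fixes a s :: "'a::linordered_field"
  assumes "0 \<le> a" "a \<le> s"
  shows "s * (a / s) = a"
  using assms by (cases "s = 0") auto

lemma sum_column_normalized_le_card:
  fixes v :: "'j \<Rightarrow> 'i \<Rightarrow> 'a::linordered_field"
  assumes "finite I"
  shows "(\<Sum>j\<in>J. \<Sum>i\<in>I. v j i / (\<Sum>j'\<in>J. v j' i)) \<le> of_nat (card I)"
proof -
  have "(\<Sum>j\<in>J. \<Sum>i\<in>I. v j i / (\<Sum>j'\<in>J. v j' i))
        = (\<Sum>i\<in>I. (\<Sum>j\<in>J. v j i) / (\<Sum>j'\<in>J. v j' i))"
    by (subst sum.swap) (simp only: sum_divide_distrib)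
  also have "\<dots> \<le> (\<Sum>i\<in>I. 1)"
    by (intro sum_mono) simp
  finally show ?thesis by simp
qed

lemma finitely_many_directions:
  fixes w :: "nat \<Rightarrow> nat \<Rightarrow> 'a::{zero, ord, times}" and dir :: "'p \<Rightarrow> nat \<Rightarrow> 'a"
  assumes "finite P" and "\<forall>j<n. \<exists>c\<ge>0. \<exists>p\<in>P. \<forall>i<d. w j i = c * dir p i"
  shows "\<exists>u. \<forall>j<n. \<exists>l<card P. \<exists>c\<ge>0. \<forall>i<d. w j i = c * u l i"
proof -
  obtain g where g: "bij_betw g {0..<card P} P"
    using ex_bij_betw_nat_finite[OF assms(1)] by blast
  have "\<exists>l<card P. \<exists>c\<ge>0. \<forall>i<d. w j i = c * dir (g l) i" if "j < n" for j
  proof -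
    obtain c p where "c \<ge> 0" "p \<in> P" "\<forall>i<d. w j i = c * dir p i"
      using assms(2) \<open>j < n\<close> by blast
    moreover obtain l where "l < card P" "g l = p"
      using g \<open>p \<in> P\<close> by (metis atLeastLessThan_iff bij_betw_iff_bijections)
    ultimately show ?thesis by blast
  qed
  then show ?thesis by (intro exI[of _ "\<lambda>l. dir (g l)"]) blast
qed

lemma grid_cone_approximation:
  fixes v :: "nat \<Rightarrow> nat \<Rightarrow> 'a::floor_ceiling" and B :: nat
  assumes B: "B > 0" and v_nonneg: "\<forall>j<n. \<forall>i<d. 0 \<le> v j i"
  defines "S \<equiv> \<lambda>i. \<Sum>j<n. v j i"
  shows "\<exists>w. (\<forall>j<n. \<forall>i<d. 0 \<le> w j i) \<and>
             (\<forall>i<d. (\<Sum>j<n. \<bar>v j i - w j i\<bar>) \<le> of_nat d / of_nat B * S i) \<and>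
             (\<forall>j<n. \<exists>c\<ge>0. \<exists>t\<in>PiE {..<d} (\<lambda>_. {0..B}).
                \<forall>i<d. w j i = c * (S i * of_nat (t i) / of_nat B))"
proof -
  define y where "y j i = v j i / S i" for j i
  define T where "T j = (\<Sum>i<d. y j i)" for j
  have v_le_S: "v j i \<le> S i" if "j < n" "i < d" for j i
    unfolding S_def using that v_nonneg by (intro member_le_sum) auto
  have y_nonneg: "0 \<le> y j i" if "j < n" "i < d" for j i
    unfolding y_def using that v_nonneg v_le_S by force
  have y_le_T: "y j i \<le> T j" if "j < n" "i < d" for j i
    unfolding T_def using that y_nonneg by (intro member_le_sum) auto
  have T_nonneg: "0 \<le> T j" if "j < n" for j
    unfolding T_def using that y_nonneg by (auto intro: sum_nonneg)
  define x where "x j i = y j i / T j" for j i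
  have "0 \<le> x j i \<and> x j i \<le> 1" if "j < n" "i < d" for j i
    unfolding x_def using y_nonneg[OF that] y_le_T[OF that] T_nonneg[OF that(1)]
    by (auto simp: divide_le_eq_1)
  then have "\<exists>t\<in>PiE {..<d} (\<lambda>_. {0..B}).
          \<forall>i<d. \<bar>x j i - of_nat (t i) / of_nat B\<bar> \<le> 1 / of_nat B" if "j < n" for j
    using that by (intro round_down_to_grid[OF B]) auto
  then obtain t where t_grid: "\<forall>j<n. t j \<in> PiE {..<d} (\<lambda>_. {0..B})"
    and t_err: "\<forall>j<n. \<forall>i<d. \<bar>x j i - of_nat (t j i) / of_nat B\<bar> \<le> 1 / of_nat B"
    by metis
  define w where "w j i = T j * (S i * of_nat (t j i) / of_nat B)" for j i
  have S_nonneg: "0 \<le> S i" if "i < d" for i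
    unfolding S_def using that v_nonneg by (auto intro: sum_nonneg)
  have entry_err: "\<bar>v j i - w j i\<bar> \<le> S i * T j / of_nat B" if "j < n" "i < d" for j i
  proof -
    have "T j * x j i = y j i"
      unfolding x_def using that y_nonneg y_le_T by (intro mult_divide_cancel_of_le)
    moreover have "S i * y j i = v j i"
      unfolding y_def using that v_nonneg v_le_S by (intro mult_divide_cancel_of_le) auto
    ultimately have "v j i - w j i = S i * T j * (x j i - of_nat (t j i) / of_nat B)"
      by (simp add: w_def algebra_simps)
    then have "\<bar>v j i - w j i\<bar> = S i * T j * \<bar>x j i - of_nat (t j i) / of_nat B\<bar>"
      using that S_nonneg T_nonneg by (simp add: abs_mult)
    also have "\<dots> \<le> S i * T j * (1 / of_nat B)"
      using that t_err S_nonneg T_nonneg by (intro mult_left_mono) auto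
    finally show ?thesis by simp
  qed
  have column_err: "(\<Sum>j<n. \<bar>v j i - w j i\<bar>) \<le> of_nat d / of_nat B * S i" if "i < d" for i
  proof -
    have "(\<Sum>j<n. \<bar>v j i - w j i\<bar>) \<le> (\<Sum>j<n. S i * T j / of_nat B)"
      using that entry_err by (intro sum_mono) auto
    also have "\<dots> = S i / of_nat B * (\<Sum>j<n. T j)"
      by (simp add: sum_distrib_left)
    also have "\<dots> \<le> S i / of_nat B * of_nat d"
      using sum_column_normalized_le_card[of "{..<d}" v "{..<n}"] that S_nonneg
      unfolding T_def y_def S_def by (intro mult_left_mono) auto
    finally show ?thesis by (simp add: mult.commute)
  qed
  show ?thesis
  proof (intro exI[of _ w] conjI allI impI)
    show "0 \<le> w j i" if "j < n" "i < d" for j i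
      unfolding w_def using that S_nonneg T_nonneg by simp
  next
    show "\<exists>c\<ge>0. \<exists>t\<in>PiE {..<d} (\<lambda>_. {0..B}). \<forall>i<d. w j i = c * (S i * of_nat (t i) / of_nat B)"
      if "j < n" for j
      using that t_grid T_nonneg unfolding w_def by blast
  qed (use column_err in blast)
qed

lemma approximation_by_few_directions:
  fixes v :: "nat \<Rightarrow> nat \<Rightarrow> 'a::floor_ceiling" and B :: nat
  assumes "B > 0" and "\<forall>j<n. \<forall>i<d. 0 \<le> v j i"
  shows "\<exists>w. (\<forall>j<n. \<forall>i<d. 0 \<le> w j i) \<and>
             (\<forall>i<d. (\<Sum>j<n. \<bar>v j i - w j i\<bar>) \<le> of_nat d / of_nat B * (\<Sum>j<n. v j i)) \<and>
             (\<exists>u. \<forall>j<n. \<exists>l<card (PiE {..<d} (\<lambda>_. {0..B})). \<exists>c\<ge>0. \<forall>i<d. w j i = c * u l i)"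
proof -
  obtain w where "\<forall>j<n. \<forall>i<d. 0 \<le> w j i"
    and "\<forall>i<d. (\<Sum>j<n. \<bar>v j i - w j i\<bar>) \<le> of_nat d / of_nat B * (\<Sum>j<n. v j i)"
    and cone: "\<forall>j<n. \<exists>c\<ge>0. \<exists>t\<in>PiE {..<d} (\<lambda>_. {0..B}).
                 \<forall>i<d. w j i = c * ((\<Sum>j<n. v j i) * of_nat (t i) / of_nat B)"
    using grid_cone_approximation[OF assms] by (elim exE conjE)
  moreover have "\<exists>u. \<forall>j<n. \<exists>l<card (PiE {..<d} (\<lambda>_. {0..B})). \<exists>c\<ge>0. \<forall>i<d. w j i = c * u l i"
    by (intro finitely_many_directions[OF _ cone] finite_PiE) auto
  ultimately show ?thesis by blast
qed

lemma ex_nat_divide_le: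
  fixes \<epsilon> :: real
  assumes "\<epsilon> > 0"
  shows "\<exists>B::nat. B > 0 \<and> real d / real B \<le> \<epsilon>"
proof -
  obtain B :: nat where B_large: "real d / \<epsilon> < real B"
    using reals_Archimedean2 by blast
  have "0 \<le> real d / \<epsilon>"
    using assms by simp
  with B_large have "B > 0"
    by linarith
  moreover have "real d < \<epsilon> * real B"
    using B_large assms by (simp add: pos_divide_less_eq mult.commute)
  ultimately show ?thesis
    by (intro exI[of _ B]) (simp add: pos_divide_le_eq mult.commute)
qed

theorem lemma28:
  fixes d :: nat and \<epsilon> :: real
  assumes "\<epsilon> > 0"
  shows "\<exists>k::nat. \<forall>(n::nat) (v::nat \<Rightarrow> nat \<Rightarrow> rat).
           (\<forall>j<n. \<forall>i<d. v j i \<ge> 0) \<longrightarrow>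
           (\<exists>w::nat \<Rightarrow> nat \<Rightarrow> rat.
              (\<forall>j<n. \<forall>i<d. w j i \<ge> 0) \<and>
              (\<forall>i<d. (\<Sum>j<n. real_of_rat \<bar>v j i - w j i\<bar>)
                        \<le> \<epsilon> * (\<Sum>j<n. real_of_rat (v j i))) \<and>
              (\<exists>u::nat \<Rightarrow> nat \<Rightarrow> real.
                 \<forall>j<n. \<exists>l<k. \<exists>c::real. c \<ge> 0 \<and>
                    (\<forall>i<d. real_of_rat (w j i) = c * u l i)))"
proof -
  obtain B :: nat where B_pos: "B > 0" and B_fine: "real d / real B \<le> \<epsilon>"
    using ex_nat_divide_le[OF assms] by blast
  let ?k = "card (PiE {..<d} (\<lambda>_. {0..B}))"
  show ?thesis
  proof (intro exI[of _ ?k] allI impI)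
    fix n and v :: "nat \<Rightarrow> nat \<Rightarrow> rat"
    assume v_nonneg: "\<forall>j<n. \<forall>i<d. 0 \<le> v j i"
    obtain w u where w_nonneg: "\<forall>j<n. \<forall>i<d. 0 \<le> w j i"
      and w_err: "\<forall>i<d. (\<Sum>j<n. \<bar>v j i - w j i\<bar>) \<le> of_nat d / of_nat B * (\<Sum>j<n. v j i)"
      and u: "\<forall>j<n. \<exists>l<?k. \<exists>c\<ge>0. \<forall>i<d. w j i = c * u l i"
      using approximation_by_few_directions[OF B_pos v_nonneg] by (elim exE conjE)
    have "(\<Sum>j<n. real_of_rat \<bar>v j i - w j i\<bar>) \<le> \<epsilon> * (\<Sum>j<n. real_of_rat (v j i))"
      if "i < d" for i
    proof -
      have "(\<Sum>j<n. real_of_rat \<bar>v j i - w j i\<bar>) = real_of_rat (\<Sum>j<n. \<bar>v j i - w j i\<bar>)"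
        by (simp add: of_rat_sum)
      also have "\<dots> \<le> real_of_rat (of_nat d / of_nat B * (\<Sum>j<n. v j i))"
        using w_err that by (simp add: of_rat_less_eq)
      also have "\<dots> = real d / real B * (\<Sum>j<n. real_of_rat (v j i))"
        by (simp add: of_rat_mult of_rat_divide of_rat_sum)
      also have "\<dots> \<le> \<epsilon> * (\<Sum>j<n. real_of_rat (v j i))"
        using B_fine v_nonneg that by (intro mult_right_mono) (auto intro: sum_nonneg)
      finally show ?thesis .
    qed
    moreover have "\<forall>j<n. \<exists>l<?k. \<exists>c\<ge>0. \<forall>i<d. real_of_rat (w j i) = c * real_of_rat (u l i)"
      using u by (metis of_rat_mult zero_le_of_rat_iff)
    ultimately show "\<exists>w. (\<forall>j<n. \<forall>i<d. w j i \<ge> 0) \<and>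
              (\<forall>i<d. (\<Sum>j<n. real_of_rat \<bar>v j i - w j i\<bar>)
                        \<le> \<epsilon> * (\<Sum>j<n. real_of_rat (v j i))) \<and>
              (\<exists>u::nat \<Rightarrow> nat \<Rightarrow> real.
                 \<forall>j<n. \<exists>l<?k. \<exists>c::real. c \<ge> 0 \<and>
                    (\<forall>i<d. real_of_rat (w j i) = c * u l i))"
      using w_nonneg by (intro exI[of _ w] conjI exI[of _ "\<lambda>l i. real_of_rat (u l i)"]) auto
  qed
qed

end
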